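(* Let $s$ be a Lucasian GNS on a ring $D$. For all positive integers $m$ and $a,b\mid m$ with $a\mid b$ or $b\mid a$, one has $s(m)\equiv\frac m\ell\frac{s(a)s(b)}{s(g)}\bmod s(a)s(b)$, where $g=\gcd(a,b)$ and $\ell=\operatorname{lcm}(a,b)$.
   Context: A GNS over $D$ is $s\colon\mathbf N\to D$ with $s(0)=0$, $s(n)$ a non-zero-divisor for $n>0$, and $s(n-k)\mid s(n)-s(k)$ for $n>k>0$. It is Lucasian if $s(a+b)\equiv s(a)+s(b)\bmod s(a)s(b)$ for all $a,b$. *)

theory Defs
  imports Main
begin

definition non_zero_divisor :: "'a::comm_ring_1 \<Rightarrow> bool" where
  "non_zero_divisor x \<longleftrightarrow> (\<forall>y. x * y = 0 \<longrightarrow> y = 0)"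

definition GNS :: "(nat \<Rightarrow> 'a::comm_ring_1) \<Rightarrow> bool" where
  "GNS s \<longleftrightarrow> s 0 = 0 \<and> (\<forall>n>0. non_zero_divisor (s n)) \<and>
     (\<forall>n k. 0 < k \<and> k < n \<longrightarrow> s (n - k) dvd s n - s k)"

definition cong_D :: "'a::comm_ring_1 \<Rightarrow> 'a \<Rightarrow> 'a \<Rightarrow> bool" where
  "cong_D x y z \<longleftrightarrow> z dvd (x - y)"

definition lucasian :: "(nat \<Rightarrow> 'a::comm_ring_1) \<Rightarrow> bool" where
  "lucasian s \<longleftrightarrow> GNS s \<and> (\<forall>a b. cong_D (s (a + b)) (s a + s b) (s a * s b))"

end

theory Submission
  imports Defs
begin

text \<open>
  Iterating the Lucasian congruence with step \<open>b\<close> gives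
  \<open>s(kb) \<equiv> s(k b - b) + s(b) mod s(k b - b) s(b)\<close>; since \<open>s\<close> is a divisibility
  sequence and \<open>a | b\<close>, the modulus is divisible by \<open>s(a) s(b)\<close>, so by induction
  \<open>s(kb) \<equiv> k s(b) mod s(a) s(b)\<close>. If \<open>a | b\<close> then \<open>g = a\<close> and \<open>\<ell> = b\<close>, and
  \<open>s(a)s(b)/s(a) = s(b)\<close> because \<open>s(a)\<close> is a non-zero-divisor; the case \<open>b | a\<close> is
  symmetric.
\<close>

lemma non_zero_divisor_mult_left_cancel:
  assumes "non_zero_divisor x" "x * y = x * z"
  shows "y = z"
proof -
  have "x * (y - z) = 0" using assms(2) by (simp add: algebra_simps)
  with assms(1) have "y - z = 0" unfolding non_zero_divisor_def by blast
  then show ?thesis by simp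
qed

lemma lucasian_zero:
  assumes "lucasian s"
  shows "s 0 = 0"
  using assms by (simp add: lucasian_def GNS_def)

lemma lucasian_non_zero_divisor:
  assumes "lucasian s" "0 < n"
  shows "non_zero_divisor (s n)"
  using assms by (simp add: lucasian_def GNS_def)

lemma lucasian_mult_dvd_add:
  assumes "lucasian s"
  shows "s x * s y dvd s (x + y) - s x - s y"
  using assms unfolding lucasian_def cong_D_def by (simp add: diff_diff_eq)

lemma lucasian_dvd_mult_self:
  assumes "lucasian s"
  shows "s a dvd s (j * a)"
proof (induction j)
  case 0
  then show ?case using lucasian_zero[OF assms] by simp
next
  case (Suc j)
  have "s a dvd s (j * a + a) - s (j * a) - s a"
    using lucasian_mult_dvd_add[OF assms, of "j * a" a] dvd_mult_right by blast
  then have "s a dvd (s (j * a + a) - s (j * a) - s a) + s (j * a) + s a"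
    using Suc.IH by (intro dvd_add) auto
  then show ?case by (simp add: add.commute)
qed

lemma lucasian_dvd:
  assumes "lucasian s" "a dvd n"
  shows "s a dvd s n"
  using assms(2) lucasian_dvd_mult_self[OF assms(1)] by (auto elim!: dvdE simp: mult.commute)

lemma lucasian_mult_cong:
  assumes "lucasian s" "a dvd b"
  shows "s a * s b dvd s (k * b) - of_nat k * s b"
proof (induction k)
  case 0
  then show ?case using lucasian_zero[OF assms(1)] by simp
next
  case (Suc k)
  have "s a * s b dvd s (k * b) * s b"
    using lucasian_dvd[OF assms(1) dvd_mult[OF assms(2)]] by (rule mult_dvd_mono) simp
  then have "s a * s b dvd s (k * b + b) - s (k * b) - s b"
    using lucasian_mult_dvd_add[OF assms(1)] dvd_trans by blast
  then have "s a * s b dvd (s (k * b + b) - s (k * b) - s b) + (s (k * b) - of_nat k * s b)"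
    using Suc.IH by (rule dvd_add)
  then show ?case by (simp add: algebra_simps)
qed

lemma lucasian_cong_of_dvd:
  assumes "lucasian s" "0 < a" "a dvd b" "b dvd m" "s a * c = s a * s b"
  shows "cong_D (s m) (of_nat (m div b) * c) (s a * s b)"
proof -
  have c: "c = s b"
    using non_zero_divisor_mult_left_cancel[OF lucasian_non_zero_divisor[OF assms(1,2)] assms(5)] .
  obtain k where m: "m = k * b" using assms(4) by (metis dvdE mult.commute)
  show ?thesis
  proof (cases "b = 0")
    case True
    then show ?thesis using m lucasian_zero[OF assms(1)] by (simp add: cong_D_def)
  next
    case False
    then show ?thesis using lucasian_mult_cong[OF assms(1,3), of k] m c by (simp add: cong_D_def)
  qed
qed

theorem corollary5p13:
  fixes s :: "nat \<Rightarrow> 'a::comm_ring_1"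
    and m a b :: nat and c :: 'a
  assumes "lucasian s"
    and "0 < m" and "0 < a" and "0 < b"
    and "a dvd m" and "b dvd m"
    and "a dvd b \<or> b dvd a"
    and "s (gcd a b) * c = s a * s b"
  shows "cong_D (s m) (of_nat (m div lcm a b) * c) (s a * s b)"
  using assms(7)
proof
  assume "a dvd b"
  then have "gcd a b = a" "lcm a b = b" by (simp_all add: gcd_nat.absorb1 lcm_nat_def assms)
  then show ?thesis using lucasian_cong_of_dvd[OF assms(1,3) \<open>a dvd b\<close> assms(6)] assms(8) by simp
next
  assume "b dvd a"
  then have "gcd a b = b" "lcm a b = a" by (simp_all add: gcd_nat.absorb2 lcm_nat_def assms)
  then show ?thesis
    using lucasian_cong_of_dvd[OF assms(1,4) \<open>b dvd a\<close> assms(5), of c] assms(8)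
    by (simp add: mult.commute)
qed

end
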